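(* In the consistent-read iteration defined in the context with step size $\beta=1$, any deterministic $x_0$, any integer $\tau\ge0$ and any deterministic $k(j)$ with $j-\tau\le k(j)\le j$, let $\rho=\max_l\frac1n\sum_{r=1}^n|A_{lr}|$. Then for every $j\ge0$ \[E_{j+1}\le E_j-(1-\rho\tau)\,\mathbb{E}\big[(x_{k(j)}-x^\star,d_j)_A^2\big]+\rho\sum_{t=k(j)}^{j-1}\mathbb{E}\big[(x_{k(t)}-x^\star,d_t)_A^2\big],\] and consequently for every $m\ge1$ \[E_m\le E_0-(1-2\rho\tau)\sum_{i=0}^{m-1}\mathbb{E}\big[(x_{k(i)}-x^\star,d_i)_A^2\big].\]
   Context: Let $n\ge2$ and let $A\in\mathbb{R}^{n\times n}$ be symmetric positive definite with all diagonal entries equal to $1$; let $b\in\mathbb{R}^n$ and $x^\star=A^{-1}b$. Write $(x,y)_A=y^TAx$ and $\|x\|_A=\sqrt{(x,x)_A}$; $e^{(1)},\dots,e^{(n)}$ are the standard basis vectors. Consistent-read iteration: let $d_0,d_1,\dots$ be i.i.d. random vectors, each uniformly distributed on $\{e^{(1)},\dots,e^{(n)}\}$; let $\tau\ge0$ be an integer and $k(0),k(1),\dots$ deterministic integers with $j-\tau\le k(j)\le j$; given $x_0\in\mathbb{R}^n$ and a step size $\beta$, define for $j\ge0$ \[\gamma_j=(x^\star-x_{k(j)},d_j)_A,\qquad x_{j+1}=x_j+\beta\gamma_jd_j.\] Define $E_m=\mathbb{E}[\|x_m-x^\star\|_A^2]$. An empty sum is zero. *)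

theory Defs
  imports "HOL-Analysis.Analysis" "HOL-Probability.Probability"
begin

definition A_inner :: "real^'n^'n \<Rightarrow> real^'n \<Rightarrow> real^'n \<Rightarrow> real" where
  "A_inner A x y = y \<bullet> (A *v x)"

text \<open>Consistent-read iteration for a fixed realization d of the directions.
  The guard on k j is vacuous under the standing hypothesis k j \<le> j.\<close>
fun cr_iter :: "real^'n^'n \<Rightarrow> real^'n \<Rightarrow> real^'n \<Rightarrow> real \<Rightarrow> (nat \<Rightarrow> nat)
    \<Rightarrow> (nat \<Rightarrow> real^'n) \<Rightarrow> nat \<Rightarrow> real^'n" where
  "cr_iter A xs x0 \<beta> k d 0 = x0"
| "cr_iter A xs x0 \<beta> k d (Suc j) =
     cr_iter A xs x0 \<beta> k d j
     + (\<beta> * A_inner A (xs - (if k j \<le> j then cr_iter A xs x0 \<beta> k d (k j) else x0)) (d j)) *\<^sub>R d j"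

definition cr_X :: "real^'n^'n \<Rightarrow> real^'n \<Rightarrow> real^'n \<Rightarrow> real \<Rightarrow> (nat \<Rightarrow> nat)
    \<Rightarrow> (nat \<Rightarrow> 'w \<Rightarrow> 'n) \<Rightarrow> nat \<Rightarrow> 'w \<Rightarrow> real^'n" where
  "cr_X A xs x0 \<beta> k dd j w = cr_iter A xs x0 \<beta> k (\<lambda>t. axis (dd t w) 1) j"

end

theory Submission
  imports Defs
begin

text \<open>
  With \<open>e_j = x_j - x*\<close> and \<open>g_j = (x_k(j) - x*, d_j)_A\<close> a step reads
  \<open>e_(j+1) = e_j - g_j d_j\<close>, so, \<open>A\<close> having unit diagonal,
  \<open>\<parallel>e_(j+1)\<parallel>^2 = \<parallel>e_j\<parallel>^2 - 2 g_j (e_j, d_j)_A + g_j^2\<close>. The stale read \<open>x_k(j)\<close> differs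
  from \<open>x_j\<close> exactly by the updates of the times \<open>k(j) \<le> t < j\<close>, hence
  \<open>(e_j, d_j)_A = g_j - \<Sum>_t g_t A[d_j, d_t]\<close>, and \<open>2 \<bar>g_j g_t\<bar> \<le> g_j^2 + g_t^2\<close> bounds the cross
  terms. In \<open>\<bar>A[d_j, d_t]\<bar> g_j^2\<close> the index \<open>d_t\<close> is independent of everything \<open>g_j\<close> and \<open>d_j\<close>
  depend on (symmetrically for \<open>\<bar>A[d_j, d_t]\<bar> g_t^2\<close>), so averaging over that uniform index
  costs at most the factor \<open>\<rho>\<close>. Summing the one-step bounds, each \<open>E[g_t^2]\<close> lies in at
  most \<open>\<tau>\<close> delay windows \<open>[k(j), j)\<close>.
\<close>

definition depends_only_on :: "nat set \<Rightarrow> ((nat \<Rightarrow> 'a) \<Rightarrow> 'b) \<Rightarrow> bool" where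
  "depends_only_on S F \<longleftrightarrow> (\<forall>s s'. (\<forall>i\<in>S. s i = s' i) \<longrightarrow> F s = F s')"

lemma depends_only_on_restrict: "depends_only_on S F \<Longrightarrow> F (restrict s S) = F s"
  unfolding depends_only_on_def by auto

lemma depends_only_on_mono: "depends_only_on S F \<Longrightarrow> S \<subseteq> T \<Longrightarrow> depends_only_on T F"
  unfolding depends_only_on_def by blast

lemma depends_only_on_coord: "i \<in> S \<Longrightarrow> depends_only_on S (\<lambda>s. h (s i))"
  unfolding depends_only_on_def by auto

lemma depends_only_on_comp: "depends_only_on S F \<Longrightarrow> depends_only_on S (\<lambda>s. h (F s))"
  unfolding depends_only_on_def by metis

lemma depends_only_on_comp2:
  "depends_only_on S F \<Longrightarrow> depends_only_on S G \<Longrightarrow> depends_only_on S (\<lambda>s. h (F s) (G s))"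
  unfolding depends_only_on_def by metis

locale coordinate_sampling = prob_space M for M :: "'w measure" +
  fixes dd :: "nat \<Rightarrow> 'w \<Rightarrow> 'n::finite"
  assumes indep_dd: "indep_vars (\<lambda>_. count_space UNIV) dd UNIV"
    and uniform_dd: "\<And>j. distr M (count_space UNIV) (dd j) = measure_pmf (pmf_of_set UNIV)"
begin

abbreviation dirs :: "'w \<Rightarrow> nat \<Rightarrow> 'n" where
  "dirs w \<equiv> \<lambda>i. dd i w"

lemma measurable_restrict_dirs:
  "finite S \<Longrightarrow> (\<lambda>w. restrict (dirs w) S) \<in> measurable M (count_space (PiE S (\<lambda>_. UNIV)))"
  using measurable_restrict[of S dd M "\<lambda>_. count_space UNIV"] indep_dd
  by (auto simp: indep_vars_def count_space_PiM_finite)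

lemma integrable_depends_only_on:
  fixes F :: "(nat \<Rightarrow> 'n) \<Rightarrow> real"
  assumes S: "finite S" and F: "depends_only_on S F"
  shows "integrable M (\<lambda>w. F (dirs w))"
proof (rule integrable_const_bound)
  let ?B = "Max ((\<lambda>s. \<bar>F s\<bar>) ` PiE S (\<lambda>_. UNIV))"
  show "AE w in M. norm (F (dirs w)) \<le> ?B"
  proof (rule AE_I2)
    fix w
    have "norm (F (dirs w)) = \<bar>F (restrict (dirs w) S)\<bar>"
      by (simp add: depends_only_on_restrict[OF F])
    also have "\<dots> \<le> ?B" using S by (intro Max_ge finite_imageI finite_PiE) auto
    finally show "norm (F (dirs w)) \<le> ?B" .
  qed
  have "(\<lambda>w. F (restrict (dirs w) S)) \<in> borel_measurable M"
    by (rule measurable_compose[OF measurable_restrict_dirs[OF S]]) simp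
  then show "(\<lambda>w. F (dirs w)) \<in> borel_measurable M"
    by (simp add: depends_only_on_restrict[OF F])
qed

lemma integral_mult_depends_only_on_disjoint:
  fixes F G :: "(nat \<Rightarrow> 'n) \<Rightarrow> real"
  assumes S: "finite S" and F: "depends_only_on S F"
    and T: "finite T" and G: "depends_only_on T G" and ST: "S \<inter> T = {}"
  shows "(\<integral>w. F (dirs w) * G (dirs w) \<partial>M) = (\<integral>w. F (dirs w) \<partial>M) * (\<integral>w. G (dirs w) \<partial>M)"
proof -
  have "indep_var (PiM S (\<lambda>_. count_space UNIV)) (\<lambda>w. restrict (dirs w) S)
      (PiM T (\<lambda>_. count_space UNIV)) (\<lambda>w. restrict (dirs w) T)"
    by (rule indep_var_restrict[OF indep_dd ST]) auto
  then have "indep_var borel (F \<circ> (\<lambda>w. restrict (dirs w) S)) borel (G \<circ> (\<lambda>w. restrict (dirs w) T))"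
    by (rule indep_var_compose) (auto simp: S T count_space_PiM_finite)
  then have "indep_var borel (\<lambda>w. F (dirs w)) borel (\<lambda>w. G (dirs w))"
    by (simp add: comp_def depends_only_on_restrict[OF F] depends_only_on_restrict[OF G])
  then show ?thesis
    by (rule indep_var_lebesgue_integral)
      (auto intro: integrable_depends_only_on[OF S F] integrable_depends_only_on[OF T G])
qed

lemma integral_uniform_coordinate:
  "(\<integral>w. f (dd t w) \<partial>M) = (\<Sum>r\<in>UNIV. f r) / real CARD('n)"
proof -
  have "dd t \<in> measurable M (count_space UNIV)" using indep_dd by (auto simp: indep_vars_def)
  then have "(\<integral>w. f (dd t w) \<partial>M) = integral\<^sup>L (distr M (count_space UNIV) (dd t)) f"
    by (intro integral_distr[symmetric]) auto
  then show ?thesis by (simp add: uniform_dd integral_pmf_of_set)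
qed

text \<open>Decomposing along the value \<open>l\<close> of \<open>s i\<close> makes the two factors independent.\<close>

lemma integral_mult_independent_coordinate_le:
  fixes F :: "(nat \<Rightarrow> 'n) \<Rightarrow> real" and h :: "'n \<Rightarrow> 'n \<Rightarrow> real"
  assumes S: "finite S" and F: "depends_only_on S F" and F_nonneg: "\<And>s. F s \<ge> 0"
    and i: "i \<in> S" and t: "t \<notin> S"
    and h_mean: "\<And>l. (\<Sum>r\<in>UNIV. h l r) / real CARD('n) \<le> c"
  shows "(\<integral>w. F (dirs w) * h (dd i w) (dd t w) \<partial>M) \<le> c * (\<integral>w. F (dirs w) \<partial>M)"
proof -
  define F' where "F' l s = (if s i = l then F s else 0)" for l s
  have F': "depends_only_on S (F' l)" for l
    unfolding F'_def by (intro depends_only_on_comp2[OF depends_only_on_coord[OF i] F])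
  have ht: "depends_only_on {t} (\<lambda>s. h l (s t))" for l
    by (rule depends_only_on_coord) simp
  have split: "F s * h (s i) (s t) = (\<Sum>l\<in>UNIV. F' l s * h l (s t))" for s
  proof -
    have "(\<Sum>l\<in>UNIV. F' l s * h l (s t)) = (\<Sum>l\<in>UNIV. if s i = l then F s * h l (s t) else 0)"
      by (rule sum.cong) (auto simp: F'_def)
    then show ?thesis by simp
  qed
  have summand: "integrable M (\<lambda>w. F' l (dirs w) * h l (dd t w))" for l
  proof (rule integrable_depends_only_on)
    show "depends_only_on (S \<union> {t}) (\<lambda>s. F' l s * h l (s t))"
      by (rule depends_only_on_comp2[OF depends_only_on_mono[OF F'] depends_only_on_mono[OF ht]]) auto
  qed (use S in simp)
  have "(\<integral>w. F (dirs w) * h (dd i w) (dd t w) \<partial>M)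
      = (\<Sum>l\<in>UNIV. (\<integral>w. F' l (dirs w) * h l (dd t w) \<partial>M))"
    using split[of "dirs _"] Bochner_Integration.integral_sum[OF summand] by simp
  also have "\<dots> = (\<Sum>l\<in>UNIV. (\<integral>w. F' l (dirs w) \<partial>M) * (\<integral>w. h l (dd t w) \<partial>M))"
    using t by (intro sum.cong[OF refl] integral_mult_depends_only_on_disjoint[OF S F' _ ht]) auto
  also have "\<dots> \<le> (\<Sum>l\<in>UNIV. (\<integral>w. F' l (dirs w) \<partial>M) * c)"
    using h_mean F_nonneg
    by (intro sum_mono mult_left_mono integral_nonneg_AE)
      (auto simp: integral_uniform_coordinate F'_def)
  also have "\<dots> = c * (\<integral>w. (\<Sum>l\<in>UNIV. F' l (dirs w)) \<partial>M)"
    by (subst Bochner_Integration.integral_sum)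
      (auto simp: sum_distrib_left mult.commute intro: integrable_depends_only_on[OF S F'])
  also have "(\<lambda>w. \<Sum>l\<in>UNIV. F' l (dirs w)) = (\<lambda>w. F (dirs w))"
    by (simp add: F'_def sum.delta)
  finally show ?thesis .
qed

end

lemma A_inner_add_left: "A_inner A (x + y) d = A_inner A x d + A_inner A y d"
  by (simp add: A_inner_def matrix_vector_right_distrib inner_add_right)

lemma A_inner_diff_left: "A_inner A (x - y) d = A_inner A x d - A_inner A y d"
  by (simp add: A_inner_def matrix_vector_mult_diff_distrib inner_diff_right)

lemma A_inner_scaleR_left: "A_inner A (c *\<^sub>R x) d = c * A_inner A x d"
  by (simp add: A_inner_def matrix_vector_mult_scaleR)

lemma A_inner_uminus_left: "A_inner A (- x) d = - A_inner A x d"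
  using A_inner_scaleR_left[of A "- 1" x d] by simp

lemma A_inner_sum_left: "A_inner A (\<Sum>t\<in>T. f t) d = (\<Sum>t\<in>T. A_inner A (f t) d)"
  by (induction T rule: infinite_finite_induct) (simp_all add: A_inner_add_left A_inner_def[of A 0])

lemma A_inner_commute: "transpose A = A \<Longrightarrow> A_inner A x y = A_inner A y x"
  unfolding A_inner_def by (metis dot_lmul_matrix inner_commute vector_transpose_matrix)

lemma A_inner_axis: "A_inner A (axis a 1) (axis b 1) = A $ b $ a"
  by (simp add: A_inner_def inner_axis' matrix_vector_mul_component inner_axis)

lemma A_inner_diff_scaleR_self:
  assumes "transpose A = A"
  shows "A_inner A (x - c *\<^sub>R d) (x - c *\<^sub>R d) = A_inner A x x - 2 * c * A_inner A x d + c\<^sup>2 * A_inner A d d"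
  using A_inner_commute[OF assms, of d x]
  by (simp add: A_inner_def matrix_vector_mult_diff_distrib matrix_vector_mult_scaleR
      inner_diff_left inner_diff_right algebra_simps power2_eq_square)

definition cr_path :: "real^'n^'n \<Rightarrow> real^'n \<Rightarrow> real^'n \<Rightarrow> (nat \<Rightarrow> nat) \<Rightarrow> nat \<Rightarrow> (nat \<Rightarrow> 'n) \<Rightarrow> real^'n"
  where "cr_path A xs x0 k j s = cr_iter A xs x0 1 k (\<lambda>t. axis (s t) 1) j"

definition cr_residual :: "real^'n^'n \<Rightarrow> real^'n \<Rightarrow> real^'n \<Rightarrow> (nat \<Rightarrow> nat) \<Rightarrow> nat \<Rightarrow> (nat \<Rightarrow> 'n) \<Rightarrow> real"
  where "cr_residual A xs x0 k j s = A_inner A (cr_path A xs x0 k (k j) s - xs) (axis (s j) 1)"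

lemma cr_path_Suc:
  "k j \<le> j \<Longrightarrow>
    cr_path A xs x0 k (Suc j) s = cr_path A xs x0 k j s - cr_residual A xs x0 k j s *\<^sub>R axis (s j) 1"
  by (simp add: cr_path_def cr_residual_def A_inner_diff_left algebra_simps)

lemma cr_path_cong:
  assumes k_le: "\<And>j. k j \<le> j" and "m \<le> N" and "\<And>i. i < N \<Longrightarrow> s i = s' i"
  shows "cr_path A xs x0 k m s = cr_path A xs x0 k m s'"
  using assms(2)
proof (induction m rule: less_induct)
  case (less m)
  show ?case
  proof (cases m)
    case (Suc j)
    then show ?thesis
      using less k_le[of j] assms(3) by (simp add: cr_path_Suc cr_residual_def)
  qed (simp add: cr_path_def)
qed

lemma depends_only_on_cr_path:
  "(\<And>j. k j \<le> j) \<Longrightarrow> m \<le> N \<Longrightarrow> depends_only_on {..<N} (cr_path A xs x0 k m)"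
  unfolding depends_only_on_def by (auto intro!: cr_path_cong)

lemma depends_only_on_cr_residual:
  assumes k_le: "\<And>j. k j \<le> j"
  shows "depends_only_on (insert j {..<k j}) (cr_residual A xs x0 k j)"
  unfolding depends_only_on_def cr_residual_def
  by (metis cr_path_cong[OF k_le order_refl] insertCI lessThan_iff)

lemma A_inner_cr_path_axis:
  assumes k_le: "\<And>j. k j \<le> j"
  shows "A_inner A (cr_path A xs x0 k j s - xs) (axis (s j) 1)
    = cr_residual A xs x0 k j s - (\<Sum>t=k j..<j. cr_residual A xs x0 k t s * A $ s j $ s t)"
proof -
  let ?x = "\<lambda>m. cr_path A xs x0 k m s" and ?d = "axis (s j) 1"
  have "?x j - ?x (k j) = (\<Sum>t=k j..<j. ?x (Suc t) - ?x t)"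
    using sum_Suc_diff'[OF k_le[of j], of "\<lambda>m. cr_path A xs x0 k m s"] by simp
  also have "\<dots> = - (\<Sum>t=k j..<j. cr_residual A xs x0 k t s *\<^sub>R axis (s t) 1)"
    by (simp add: cr_path_Suc k_le sum_negf)
  finally have "A_inner A (?x j - ?x (k j)) ?d
      = - (\<Sum>t=k j..<j. cr_residual A xs x0 k t s * A $ s j $ s t)"
    by (simp add: A_inner_uminus_left A_inner_sum_left A_inner_scaleR_left A_inner_axis)
  moreover have "?x j - xs = (?x (k j) - xs) + (?x j - ?x (k j))" by simp
  ultimately show ?thesis
    by (simp only: A_inner_add_left cr_residual_def)
qed

lemma two_mult_le_sq_mult_abs: "2 * a * b * c \<le> a\<^sup>2 * \<bar>c\<bar> + b\<^sup>2 * \<bar>c\<bar>"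
  for a b c :: real
proof -
  have "2 * a * b * c \<le> \<bar>2 * a * b\<bar> * \<bar>c\<bar>" by (metis abs_ge_self abs_mult)
  also have "\<dots> \<le> (a\<^sup>2 + b\<^sup>2) * \<bar>c\<bar>"
    using sum_squares_bound[of "\<bar>a\<bar>" "\<bar>b\<bar>"] by (intro mult_right_mono) (simp_all add: abs_mult)
  finally show ?thesis by (simp add: algebra_simps)
qed

lemma cr_path_sq_err_Suc_le:
  fixes A :: "real^'n^'n" and xs x0 :: "real^'n" and s :: "nat \<Rightarrow> 'n"
  assumes k_le: "\<And>j. k j \<le> j" and sym: "transpose A = A" and unit_diag: "\<And>i. A $ i $ i = 1"
  defines "e \<equiv> \<lambda>m. cr_path A xs x0 k m s - xs" and "g \<equiv> \<lambda>m. cr_residual A xs x0 k m s"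
  shows "A_inner A (e (Suc j)) (e (Suc j)) \<le> A_inner A (e j) (e j) - (g j)\<^sup>2
    + (\<Sum>t=k j..<j. (g j)\<^sup>2 * \<bar>A $ s j $ s t\<bar> + (g t)\<^sup>2 * \<bar>A $ s j $ s t\<bar>)"
proof -
  define d :: "real^'n" where "d = axis (s j) 1"
  have "A_inner A (e (Suc j)) (e (Suc j))
      = A_inner A (e j) (e j) - 2 * g j * A_inner A (e j) d + (g j)\<^sup>2 * A_inner A d d"
    using A_inner_diff_scaleR_self[OF sym, of "e j" "g j" d]
    by (simp add: e_def g_def d_def cr_path_Suc k_le algebra_simps)
  also have "\<dots> = A_inner A (e j) (e j) - (g j)\<^sup>2 + (\<Sum>t=k j..<j. 2 * g j * g t * A $ s j $ s t)"
    by (simp add: d_def e_def g_def A_inner_axis unit_diag A_inner_cr_path_axis[OF k_le]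
        algebra_simps power2_eq_square sum_distrib_left)
  also have "\<dots> \<le> A_inner A (e j) (e j) - (g j)\<^sup>2
      + (\<Sum>t=k j..<j. (g j)\<^sup>2 * \<bar>A $ s j $ s t\<bar> + (g t)\<^sup>2 * \<bar>A $ s j $ s t\<bar>)"
    by (intro add_left_mono sum_mono two_mult_le_sq_mult_abs)
  finally show ?thesis .
qed

lemma sum_delay_windows_le:
  fixes G :: "nat \<Rightarrow> real"
  assumes G_nonneg: "\<And>t. G t \<ge> 0" and delay: "\<And>j. j \<le> k j + \<tau>"
  shows "(\<Sum>j<m. \<Sum>t=k j..<j. G t) \<le> real \<tau> * (\<Sum>t<m. G t)"
proof -
  define W where "W t = {j\<in>{..<m}. t \<in> {k j..<j}}" for t
  have "(\<Sum>j<m. \<Sum>t=k j..<j. G t) = (\<Sum>j<m. \<Sum>t<m. if t \<in> {k j..<j} then G t else 0)"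
  proof (rule sum.cong[OF refl])
    fix j assume "j \<in> {..<m}"
    then have "{..<m} \<inter> {k j..<j} = {k j..<j}" by auto
    then show "(\<Sum>t=k j..<j. G t) = (\<Sum>t<m. if t \<in> {k j..<j} then G t else 0)"
      using sum.inter_restrict[of "{..<m}" G "{k j..<j}"] by simp
  qed
  also have "\<dots> = (\<Sum>t<m. real (card (W t)) * G t)"
    by (subst sum.swap) (simp add: W_def sum.If_cases Int_def)
  also have "\<dots> \<le> (\<Sum>t<m. real \<tau> * G t)"
  proof (intro sum_mono mult_right_mono G_nonneg)
    fix t
    have "W t \<subseteq> {Suc t..t + \<tau>}"
      using delay by (auto simp: W_def Suc_le_eq) (meson add_le_mono1 le_trans)
    then show "real (card (W t)) \<le> real \<tau>"
      using card_mono[of "{Suc t..t + \<tau>}" "W t"] by simp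
  qed
  finally show ?thesis by (simp add: sum_distrib_left)
qed

lemma delayed_descent_sum_le:
  fixes E G :: "nat \<Rightarrow> real"
  assumes step: "\<And>j. E (Suc j) \<le> E j - (1 - \<rho> * real \<tau>) * G j + \<rho> * (\<Sum>t=k j..<j. G t)"
    and G_nonneg: "\<And>t. G t \<ge> 0" and \<rho>_nonneg: "\<rho> \<ge> 0" and delay: "\<And>j. j \<le> k j + \<tau>"
  shows "E m \<le> E 0 - (1 - 2 * \<rho> * real \<tau>) * (\<Sum>i<m. G i)"
proof -
  have "E m \<le> E 0 - (1 - \<rho> * real \<tau>) * (\<Sum>i<m. G i) + \<rho> * (\<Sum>j<m. \<Sum>t=k j..<j. G t)"
  proof (induction m)
    case (Suc m)
    then show ?case using step[of m] by (simp add: algebra_simps)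
  qed simp
  moreover have "\<rho> * (\<Sum>j<m. \<Sum>t=k j..<j. G t) \<le> \<rho> * (real \<tau> * (\<Sum>t<m. G t))"
    by (intro mult_left_mono sum_delay_windows_le G_nonneg delay \<rho>_nonneg)
  ultimately show ?thesis by (simp add: algebra_simps)
qed

locale consistent_read = coordinate_sampling M dd
  for M :: "'w measure" and dd :: "nat \<Rightarrow> 'w \<Rightarrow> 'n::finite" +
  fixes A :: "real^'n^'n" and xs x0 :: "real^'n" and k :: "nat \<Rightarrow> nat"
  assumes sym: "transpose A = A" and unit_diag: "\<And>i. A $ i $ i = 1" and k_le: "\<And>j. k j \<le> j"
begin

definition expected_sq_err :: "nat \<Rightarrow> real" where
  "expected_sq_err j = (\<integral>w. A_inner A (cr_path A xs x0 k j (dirs w) - xs) (cr_path A xs x0 k j (dirs w) - xs) \<partial>M)"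

definition expected_sq_res :: "nat \<Rightarrow> real" where
  "expected_sq_res t = (\<integral>w. (cr_residual A xs x0 k t (dirs w))\<^sup>2 \<partial>M)"

lemma expected_sq_res_nonneg: "expected_sq_res t \<ge> 0"
  unfolding expected_sq_res_def by (rule integral_nonneg_AE) simp

lemma depends_only_on_sq_res: "depends_only_on (insert t {..<k t}) (\<lambda>s. (cr_residual A xs x0 k t s)\<^sup>2)"
  by (rule depends_only_on_comp[OF depends_only_on_cr_residual[OF k_le]])

lemma integral_sq_res_mult_entry_current_le:
  assumes row: "\<And>l. (\<Sum>r\<in>UNIV. \<bar>A $ l $ r\<bar>) / real CARD('n) \<le> \<rho>" and t: "k j \<le> t" "t < j"
  shows "(\<integral>w. (cr_residual A xs x0 k j (dirs w))\<^sup>2 * \<bar>A $ dd j w $ dd t w\<bar> \<partial>M) \<le> \<rho> * expected_sq_res j"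
  unfolding expected_sq_res_def
  by (rule integral_mult_independent_coordinate_le[OF _ depends_only_on_sq_res _ _ _ row]) (use t in auto)

lemma integral_sq_res_mult_entry_past_le:
  assumes row: "\<And>l. (\<Sum>r\<in>UNIV. \<bar>A $ l $ r\<bar>) / real CARD('n) \<le> \<rho>" and t: "t < j"
  shows "(\<integral>w. (cr_residual A xs x0 k t (dirs w))\<^sup>2 * \<bar>A $ dd j w $ dd t w\<bar> \<partial>M) \<le> \<rho> * expected_sq_res t"
proof -
  have "A $ r $ l = A $ l $ r" for l r
    using arg_cong[OF sym, of "\<lambda>B. B $ l $ r"] by (simp add: transpose_def)
  then show ?thesis
    unfolding expected_sq_res_def using k_le[of t] t
    by (intro integral_mult_independent_coordinate_le[OF _ depends_only_on_sq_res, where h="\<lambda>l r. \<bar>A $ r $ l\<bar>"])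
      (auto simp: row)
qed

lemma integrable_sq_err: "integrable M (\<lambda>w. A_inner A (cr_path A xs x0 k m (dirs w) - xs) (cr_path A xs x0 k m (dirs w) - xs))"
  by (rule integrable_depends_only_on[OF _ depends_only_on_comp[OF depends_only_on_cr_path[OF k_le order_refl]]])
    simp

lemma integrable_sq_res: "integrable M (\<lambda>w. (cr_residual A xs x0 k t (dirs w))\<^sup>2)"
  by (rule integrable_depends_only_on[OF _ depends_only_on_sq_res]) simp

lemma integrable_sq_res_mult:
  "integrable M (\<lambda>w. (cr_residual A xs x0 k t (dirs w))\<^sup>2 * h (dd i w) (dd l w))"
proof (rule integrable_depends_only_on)
  let ?S = "insert t {..<k t} \<union> {i, l}"
  have "depends_only_on ?S (\<lambda>s. h (s i) (s l))"
    unfolding depends_only_on_def by simp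
  moreover have "depends_only_on ?S (\<lambda>s. (cr_residual A xs x0 k t s)\<^sup>2)"
    by (rule depends_only_on_mono[OF depends_only_on_sq_res]) auto
  ultimately show "depends_only_on ?S (\<lambda>s. (cr_residual A xs x0 k t s)\<^sup>2 * h (s i) (s l))"
    by (rule depends_only_on_comp2[where h = "\<lambda>a b. b * a"])
qed simp

lemma expected_sq_err_Suc_le_cross_terms:
  "expected_sq_err (Suc j) \<le> expected_sq_err j - expected_sq_res j
    + (\<Sum>t=k j..<j. (\<integral>w. (cr_residual A xs x0 k j (dirs w))\<^sup>2 * \<bar>A $ dd j w $ dd t w\<bar> \<partial>M)
                  + (\<integral>w. (cr_residual A xs x0 k t (dirs w))\<^sup>2 * \<bar>A $ dd j w $ dd t w\<bar> \<partial>M))"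
  (is "_ \<le> _ - _ + (\<Sum>t=k j..<j. integral\<^sup>L M (?R1 t) + integral\<^sup>L M (?R2 t))")
proof -
  let ?Q = "\<lambda>m w. A_inner A (cr_path A xs x0 k m (dirs w) - xs) (cr_path A xs x0 k m (dirs w) - xs)"
  let ?g = "\<lambda>w. (cr_residual A xs x0 k j (dirs w))\<^sup>2" and ?R = "\<lambda>t w. ?R1 t w + ?R2 t w"
  have int_R: "integrable M (?R t)" for t
    by (intro Bochner_Integration.integrable_add integrable_sq_res_mult)
  have int_sum: "integrable M (\<lambda>w. \<Sum>t=k j..<j. ?R t w)"
    by (rule Bochner_Integration.integrable_sum[OF int_R])
  have "expected_sq_err (Suc j) \<le> (\<integral>w. ?Q j w - ?g w + (\<Sum>t=k j..<j. ?R t w) \<partial>M)"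
    unfolding expected_sq_err_def
  proof (rule integral_mono)
    show "integrable M (\<lambda>w. ?Q j w - ?g w + (\<Sum>t=k j..<j. ?R t w))"
      by (intro Bochner_Integration.integrable_add Bochner_Integration.integrable_diff
          integrable_sq_err integrable_sq_res int_sum)
    show "integrable M (?Q (Suc j))" by (rule integrable_sq_err)
    show "?Q (Suc j) w \<le> ?Q j w - ?g w + (\<Sum>t=k j..<j. ?R t w)" for w
      by (rule cr_path_sq_err_Suc_le[OF k_le sym unit_diag])
  qed
  also have "\<dots> = (\<integral>w. ?Q j w \<partial>M) - (\<integral>w. ?g w \<partial>M) + (\<Sum>t=k j..<j. integral\<^sup>L M (?R t))"
    using Bochner_Integration.integral_add[OF Bochner_Integration.integrable_diff[OF integrable_sq_err integrable_sq_res] int_sum]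
      Bochner_Integration.integral_diff[OF integrable_sq_err integrable_sq_res]
      Bochner_Integration.integral_sum[where f = "?R", OF int_R]
    by simp
  also have "(\<Sum>t=k j..<j. integral\<^sup>L M (?R t)) = (\<Sum>t=k j..<j. integral\<^sup>L M (?R1 t) + integral\<^sup>L M (?R2 t))"
    by (intro sum.cong[OF refl] Bochner_Integration.integral_add integrable_sq_res_mult)
  finally show ?thesis
    unfolding expected_sq_err_def expected_sq_res_def .
qed

lemma expected_sq_err_Suc_le:
  assumes row: "\<And>l. (\<Sum>r\<in>UNIV. \<bar>A $ l $ r\<bar>) / real CARD('n) \<le> \<rho>" and \<rho>_nonneg: "\<rho> \<ge> 0"
    and delay: "j \<le> k j + \<tau>"
  shows "expected_sq_err (Suc j)
    \<le> expected_sq_err j - (1 - \<rho> * real \<tau>) * expected_sq_res j + \<rho> * (\<Sum>t=k j..<j. expected_sq_res t)"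
proof -
  note expected_sq_err_Suc_le_cross_terms
  also have "expected_sq_err j - expected_sq_res j
      + (\<Sum>t=k j..<j. (\<integral>w. (cr_residual A xs x0 k j (dirs w))\<^sup>2 * \<bar>A $ dd j w $ dd t w\<bar> \<partial>M)
                    + (\<integral>w. (cr_residual A xs x0 k t (dirs w))\<^sup>2 * \<bar>A $ dd j w $ dd t w\<bar> \<partial>M))
    \<le> expected_sq_err j - expected_sq_res j + (\<Sum>t=k j..<j. \<rho> * expected_sq_res j + \<rho> * expected_sq_res t)"
    using integral_sq_res_mult_entry_current_le[OF row] integral_sq_res_mult_entry_past_le[OF row]
    by (intro add_left_mono sum_mono add_mono) auto
  also have "\<dots> = expected_sq_err j - (1 - \<rho> * real (j - k j)) * expected_sq_res j
      + \<rho> * (\<Sum>t=k j..<j. expected_sq_res t)"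
    by (simp add: sum.distrib sum_distrib_left algebra_simps)
  also have "\<dots> \<le> expected_sq_err j - (1 - \<rho> * real \<tau>) * expected_sq_res j
      + \<rho> * (\<Sum>t=k j..<j. expected_sq_res t)"
    using delay \<rho>_nonneg expected_sq_res_nonneg[of j]
    by (intro add_right_mono diff_left_mono mult_right_mono) (auto intro: mult_left_mono)
  finally show ?thesis .
qed

end

theorem mainTheorem7:
  fixes A :: "real^'n^'n" and b x0 xs :: "real^'n"
    and M :: "'w measure" and dd :: "nat \<Rightarrow> 'w \<Rightarrow> 'n"
    and \<tau> :: nat and k :: "nat \<Rightarrow> nat"
  assumes n2: "CARD('n) \<ge> 2"
    and symA: "transpose A = A"
    and posdef: "\<And>x. x \<noteq> 0 \<Longrightarrow> x \<bullet> (A *v x) > 0"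
    and diag: "\<And>i. A $ i $ i = 1"
    and P: "prob_space M"
    and indep: "prob_space.indep_vars M (\<lambda>_. count_space UNIV) dd UNIV"
    and unif: "\<And>j. distr M (count_space UNIV) (dd j) = measure_pmf (pmf_of_set UNIV)"
    and k_le: "\<And>j. k j \<le> j" and k_ge: "\<And>j. j \<le> k j + \<tau>"
    and xs_def: "xs = matrix_inv A *v b"
  defines "E \<equiv> (\<lambda>j. integral\<^sup>L M (\<lambda>w. A_inner A (cr_X A xs x0 1 k dd j w - xs) (cr_X A xs x0 1 k dd j w - xs)))"
    and "G \<equiv> (\<lambda>j. integral\<^sup>L M (\<lambda>w. (A_inner A (cr_X A xs x0 1 k dd (k j) w - xs) (axis (dd j w) 1))\<^sup>2))"
    and "\<rho> \<equiv> (MAX l. (\<Sum>r\<in>UNIV. \<bar>A $ l $ r\<bar>) / real CARD('n))"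
  shows "(\<forall>j. E (Suc j) \<le> E j - (1 - \<rho> * real \<tau>) * G j + \<rho> * (\<Sum>t=k j..<j. G t))
       \<and> (\<forall>m\<ge>1. E m \<le> E 0 - (1 - 2 * \<rho> * real \<tau>) * (\<Sum>i<m. G i))"
proof -
  interpret consistent_read M dd A xs x0 k
    using P indep unif symA diag k_le
    by (simp add: consistent_read_def consistent_read_axioms_def coordinate_sampling_def
        coordinate_sampling_axioms_def)
  have E: "E = expected_sq_err" and G: "G = expected_sq_res"
    by (simp_all add: fun_eq_iff E_def G_def expected_sq_err_def expected_sq_res_def
        cr_X_def cr_path_def cr_residual_def)
  have row: "(\<Sum>r\<in>UNIV. \<bar>A $ l $ r\<bar>) / real CARD('n) \<le> \<rho>" for l
    unfolding \<rho>_def by (rule Max_ge) auto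
  have \<rho>_nonneg: "\<rho> \<ge> 0"
    by (rule order_trans[OF _ row[of undefined]]) (simp add: sum_nonneg)
  have step: "E (Suc j) \<le> E j - (1 - \<rho> * real \<tau>) * G j + \<rho> * (\<Sum>t=k j..<j. G t)" for j
    unfolding E G by (rule expected_sq_err_Suc_le[OF row \<rho>_nonneg k_ge])
  show ?thesis
    using step delayed_descent_sum_le[OF step _ \<rho>_nonneg k_ge]
    by (auto simp: G expected_sq_res_nonneg)
qed

end
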